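(* Consider the $l$-th cycle of RPF-SFISTA, with $\mu=\mu_{l-1}$. For every iteration index $j\ge1$ generated during this cycle: (a) $L_{j-1}\le L_j$ (the sequence $\{L_j\}$ is nondecreasing); (b) $\tau_{j-1}=1+\frac{\mu A_{j-1}}{2}$, $\frac{\tau_{j-1}A_j}{a_{j-1}^2}=L_j$, $\underline M_l\le L_{j-1}\le\max\{\underline M_l,\kappa\bar L\}$, $v_j\in\nabla f(y_j)+\partial h(y_j)$, and $\|v_j\|\le\zeta_l\|y_j-\tilde x_{j-1}\|$; (c) $A_jL_j\ge\max\left\{\frac{j^2}{4},\ (1+Q_l^{-1})^{2(j-1)}\right\}$.
   Context: Setup. Let $f:\mathbb R^n\to\mathbb R$ be convex and differentiable with $\|\nabla f(z')-\nabla f(z)\|\le\bar L\|z'-z\|$ for all $z,z'\in\mathbb R^n$ (some $\bar L\ge0$). Let $h:\mathbb R^n\to(-\infty,\infty]$ be proper, lower semicontinuous and convex with domain $\mathcal H$. Let $\phi:=f+h$ be $\bar\mu$-strongly convex for some $\bar\mu>0$, with (unique) minimizer $z^*$. Write $\ell_f(u;x):=f(x)+\langle\nabla f(x),u-x\rangle$. Define $\kappa:=2\beta/(1-\chi)$. RPF-SFISTA. Parameters $\chi\in(0,1)$, $\beta>1$; inputs $\mu_0>0$, $\bar M_0>0$, $z_0\in\mathcal H$, $\hat\epsilon>0$. The method runs in cycles $l=1,2,\dots$. At the start of cycle $l$: choose $\underline M_l\in[\max\{\bar M_{l-1}/4,\bar M_0\},\bar M_{l-1}]$ (so $\underline M_1=\bar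 M_0$), set $\mu:=\mu_{l-1}$, $x_0:=z_{l-1}$, $\xi_0:=y_0:=x_0$, $A_0:=0$, $\tau_0:=1$, $L_0:=\underline M_l$. Then for $j=1,2,\dots$: (i) set $L_j:=L_{j-1}$; (ii) compute $a_{j-1}=\frac{\tau_{j-1}+\sqrt{\tau_{j-1}^2+4\tau_{j-1}A_{j-1}L_j}}{2L_j}$, $\tilde x_{j-1}=\frac{A_{j-1}y_{j-1}+a_{j-1}x_{j-1}}{A_{j-1}+a_{j-1}}$, $y_j=\arg\min_{u}\{\ell_f(u;\tilde x_{j-1})+h(u)+\frac{L_j}{2}\|u-\tilde x_{j-1}\|^2\}$; if $f(y_j)\le\ell_f(y_j;\tilde x_{j-1})+\frac{(1-\chi)L_j}{4}\|y_j-\tilde x_{j-1}\|^2$ go to (iii), otherwise replace $L_j$ by $\beta L_j$ and repeat (ii); (iii) set $\xi_j:=y_j$ if $\phi(y_j)\le\phi(\xi_{j-1})$ and $\xi_j:=\xi_{j-1}$ otherwise; $A_j:=A_{j-1}+a_{j-1}$; $\tau_j:=\tau_{j-1}+a_{j-1}\mu/2$; $s_j:=L_j(\tilde x_{j-1}-y_j)$; $x_j:=\tau_j^{-1}[\mu a_{j-1}y_j/2+\tau_{j-1}x_{j-1}-a_{j-1}s_j]$; $v_j:=\nabla f(y_j)-\nabla f(\tilde x_{j-1})+s_j$; (iv) if $\|\xi_j-x_0\|^2<\chi A_jL_j\|y_j-\tilde x_{j-1}\|^2$, the cycle ends with a restart: set $z_l:=\xi_j$, $\bar M_l:=L_j$,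 $\mu_l:=\mu/2$ and start cycle $l+1$; (v) otherwise, if $\|v_j\|\le\hat\epsilon$, stop and output $(y,v,\xi,L):=(y_j,v_j,\xi_j,L_j)$; else go to iteration $j+1$. Cycle quantities: $\zeta_l:=\bar L+\max\{\underline M_l,\kappa\bar L\}$ and $Q_l:=2\sqrt2\sqrt{\max\{\underline M_l,\kappa\bar L\}/\mu_{l-1}}$. *)

theory Defs
  imports "HOL-Analysis.Analysis"
begin

definition proper_fun :: "('a \<Rightarrow> ereal) \<Rightarrow> bool" where
  "proper_fun h \<longleftrightarrow> (\<forall>x. h x \<noteq> -\<infinity>) \<and> (\<exists>x. h x < \<infinity>)"

definition lsc_fun :: "('a::topological_space \<Rightarrow> ereal) \<Rightarrow> bool" where
  "lsc_fun h \<longleftrightarrow> (\<forall>x. h x \<le> Liminf (at x) h)"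

definition convex_ext :: "('a::real_vector \<Rightarrow> ereal) \<Rightarrow> bool" where
  "convex_ext h \<longleftrightarrow> (\<forall>x y t. 0 < t \<and> t < 1 \<longrightarrow>
     h ((1 - t) *\<^sub>R x + t *\<^sub>R y) \<le> ereal (1 - t) * h x + ereal t * h y)"

definition strongly_convex_ext :: "real \<Rightarrow> ('a::real_normed_vector \<Rightarrow> ereal) \<Rightarrow> bool" where
  "strongly_convex_ext m h \<longleftrightarrow> (\<forall>x y t. 0 < t \<and> t < 1 \<longrightarrow>
     h ((1 - t) *\<^sub>R x + t *\<^sub>R y) \<le> ereal (1 - t) * h x + ereal t * h y
        - ereal (m / 2 * t * (1 - t) * (norm (x - y))\<^sup>2))"

definition dom_fun :: "('a \<Rightarrow> ereal) \<Rightarrow> 'a set" where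
  "dom_fun h = {x. h x < \<infinity>}"

definition subdiff :: "('a::real_inner \<Rightarrow> ereal) \<Rightarrow> 'a \<Rightarrow> 'a set" where
  "subdiff h y = {g. h y < \<infinity> \<and> (\<forall>u. h u \<ge> h y + ereal (inner g (u - y)))}"

definition lin_f :: "('a::real_inner \<Rightarrow> real) \<Rightarrow> ('a \<Rightarrow> 'a) \<Rightarrow> 'a \<Rightarrow> 'a \<Rightarrow> real" where
  "lin_f f gf u x = f x + inner (gf x) (u - x)"

definition prox_obj :: "('a::real_inner \<Rightarrow> real) \<Rightarrow> ('a \<Rightarrow> 'a) \<Rightarrow> ('a \<Rightarrow> ereal) \<Rightarrow> 'a \<Rightarrow> real \<Rightarrow> 'a \<Rightarrow> ereal" where
  "prox_obj f gf h xt L u = ereal (lin_f f gf u xt + L / 2 * (norm (u - xt))\<^sup>2) + h u"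

definition prox_pt :: "('a::real_inner \<Rightarrow> real) \<Rightarrow> ('a \<Rightarrow> 'a) \<Rightarrow> ('a \<Rightarrow> ereal) \<Rightarrow> 'a \<Rightarrow> real \<Rightarrow> 'a" where
  "prox_pt f gf h xt L = (SOME y. \<forall>u. prox_obj f gf h xt L y \<le> prox_obj f gf h xt L u)"

definition acoef :: "real \<Rightarrow> real \<Rightarrow> real \<Rightarrow> real" where
  "acoef tau A L = (tau + sqrt (tau\<^sup>2 + 4 * tau * A * L)) / (2 * L)"

definition xtil :: "real \<Rightarrow> 'a::real_vector \<Rightarrow> real \<Rightarrow> 'a \<Rightarrow> 'a" where
  "xtil A y a x = (1 / (A + a)) *\<^sub>R (A *\<^sub>R y + a *\<^sub>R x)"

definition ls_ok :: "('a::real_inner \<Rightarrow> real) \<Rightarrow> ('a \<Rightarrow> 'a) \<Rightarrow> ('a \<Rightarrow> ereal) \<Rightarrow> real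
    \<Rightarrow> real \<Rightarrow> real \<Rightarrow> 'a \<Rightarrow> 'a \<Rightarrow> real \<Rightarrow> bool" where
  "ls_ok f gf h chi tau A xprev yprev M =
     (let a = acoef tau A M; xt = xtil A yprev a xprev; y = prox_pt f gf h xt M
      in f y \<le> lin_f f gf y xt + (1 - chi) * M / 4 * (norm (y - xt))\<^sup>2)"

end

theory Submission
  imports Defs
begin

text \<open>
  The bounds on L come from the backtracking: by the descent lemma the line-search test
  passes as soon as L \<ge> 2 Lbar / (1 - chi), so the search overshoots this threshold by at most
  a factor beta. The prox subproblem has a minimiser by lower semicontinuity and coercivity, and
  its first-order optimality condition puts v j into \<nabla>f(y j) + \<partial>h(y j). Finally a solves
  L a^2 = tau (A + a); since a = (\<surd>A' - \<surd>A)(\<surd>A' + \<surd>A) \<le> 2 \<surd>A' (\<surd>A' - \<surd>A) with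
  A' = A + a, this gives tau \<le> 4 L (\<surd>A' - \<surd>A)^2. With tau \<ge> 1 and L nondecreasing,
  \<surd>(A L) increases by at least 1/2 per step; with tau \<ge> mu A / 2 and L bounded above,
  \<surd>A increases at least by the factor 1 + 1/Q.
\<close>

lemma lsc_fun_iff_eventually:
  "lsc_fun h \<longleftrightarrow> (\<forall>x c. c < h x \<longrightarrow> (\<forall>\<^sub>F w in at x. c < h w))"
  unfolding lsc_fun_def le_Liminf_iff by blast

lemma lsc_fun_open_superlevel:
  fixes F :: "'a::topological_space \<Rightarrow> ereal"
  assumes "lsc_fun F"
  shows "open {w. c < F w}"
proof (subst open_subopen, intro ballI)
  fix x assume "x \<in> {w. c < F w}"
  then have "c < F x" by simp
  with assms have "\<forall>\<^sub>F w in at x. c < F w" by (simp add: lsc_fun_iff_eventually)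
  then obtain S where "open S" "x \<in> S" "\<forall>w\<in>S. w \<noteq> x \<longrightarrow> c < F w"
    unfolding eventually_at_topological by auto
  moreover from this(3) \<open>c < F x\<close> have "S \<subseteq> {w. c < F w}" by auto
  ultimately show "\<exists>T. open T \<and> x \<in> T \<and> T \<subseteq> {w. c < F w}" by blast
qed

lemma lsc_fun_attains_min_on_compact:
  fixes F :: "'a::topological_space \<Rightarrow> ereal"
  assumes "lsc_fun F" "compact K" "K \<noteq> {}"
  shows "\<exists>y\<in>K. \<forall>u\<in>K. F y \<le> F u"
proof (rule ccontr)
  assume "\<not> ?thesis"
  then have "K \<subseteq> (\<Union>x\<in>K. {w. F x < F w})" by (auto simp: not_le)
  then obtain C where C: "C \<subseteq> K" "finite C" "K \<subseteq> (\<Union>x\<in>C. {w. F x < F w})"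
    using compactE_image[of K K "\<lambda>x. {w. F x < F w}"] assms(2) lsc_fun_open_superlevel[OF assms(1)]
    by blast
  with assms(3) have "C \<noteq> {}" by auto
  then obtain x0 where "x0 \<in> C" "\<forall>x\<in>C. F x0 \<le> F x"
    using ex_min_if_finite[of "F ` C"] C(2) by (auto simp: not_less)
  moreover from C \<open>x0 \<in> C\<close> obtain x1 where "x1 \<in> C" "F x1 < F x0" by blast
  ultimately show False by (meson leD)
qed

lemma lsc_fun_attains_min:
  fixes F :: "'a::euclidean_space \<Rightarrow> ereal"
  assumes "lsc_fun F" and outside: "\<And>u. R < norm (u - z) \<Longrightarrow> F p \<le> F u"
  shows "\<exists>y. \<forall>u. F y \<le> F u"
proof -
  define K where "K = cball z (max R (dist z p))"
  have "p \<in> K" by (simp add: K_def)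
  then obtain y where "y \<in> K" and y: "\<forall>u\<in>K. F y \<le> F u"
    using lsc_fun_attains_min_on_compact[OF assms(1), of K] by (auto simp: K_def)
  have "F y \<le> F u" for u
  proof (cases "u \<in> K")
    case False
    then have "R < norm (u - z)" by (simp add: K_def dist_norm norm_minus_commute)
    then have "F p \<le> F u" by (rule outside)
    with y \<open>p \<in> K\<close> show ?thesis by (meson order.trans)
  qed (use y in blast)
  then show ?thesis by blast
qed

lemma lsc_fun_add_continuous:
  fixes h :: "'a::topological_space \<Rightarrow> ereal"
  assumes "lsc_fun h" and h_nm: "\<And>w. h w \<noteq> -\<infinity>" and "continuous_on UNIV q"
  shows "lsc_fun (\<lambda>w. ereal (q w) + h w)"
  unfolding lsc_fun_iff_eventually
proof (intro allI impI)
  fix x c assume c: "c < ereal (q x) + h x"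
  show "\<forall>\<^sub>F w in at x. c < ereal (q w) + h w"
  proof (cases c)
    case MInf
    have "-\<infinity> < ereal (q w) + h w" for w using h_nm[of w] by (cases "h w") auto
    then show ?thesis using MInf by simp
  next
    case (real r)
    have "ereal (r - q x) < h x"
      using c real h_nm[of x] by (cases "h x") auto
    then obtain t where t: "r - q x < t" "ereal t < h x" using ereal_dense2 by force
    have "(q \<longlongrightarrow> q x) (at x)" using assms(3) by (simp add: continuous_on_def)
    then have "\<forall>\<^sub>F w in at x. r - t < q w" using t(1) by (intro order_tendstoD) auto
    moreover have "\<forall>\<^sub>F w in at x. ereal t < h w"
      using assms(1) t(2) unfolding lsc_fun_iff_eventually by blast
    ultimately show ?thesis
    proof eventually_elim
      case (elim w)
      then have "ereal r < ereal (q w) + ereal t" by simp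
      also have "\<dots> \<le> ereal (q w) + h w" using elim by (intro add_left_mono) simp
      finally show ?case using real by simp
    qed
  qed (use c in simp)
qed

lemma convex_ext_norm_minorant:
  fixes h :: "'a::euclidean_space \<Rightarrow> ereal"
  assumes "proper_fun h" "lsc_fun h" "convex_ext h"
  shows "\<exists>c B. 0 \<le> B \<and> (\<forall>u. ereal (c - B * norm (u - z)) \<le> h u)"
proof -
  have h_nm: "h w \<noteq> -\<infinity>" for w using assms(1) by (simp add: proper_fun_def)
  obtain p hp where hp: "h p = ereal hp"
    using assms(1) unfolding proper_fun_def by (metis less_ereal.simps(2) real_of_ereal.cases)
  obtain w where "w \<in> cball p 1" and w: "\<forall>u\<in>cball p 1. h w \<le> h u"
    using lsc_fun_attains_min_on_compact[OF assms(2), of "cball p 1"] by auto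
  then have "h w \<le> h p" by simp
  then obtain m where m: "h w = ereal m" "m \<le> hp"
    using hp h_nm[of w] by (cases "h w") auto
  \<comment> \<open>h is bounded below by m on the unit ball around p; convexity along rays from p
      turns this into a bound that decreases linearly with the distance to p.\<close>
  define B where "B = hp - m"
  have minorant_p: "ereal (m - B * norm (u - p)) \<le> h u" for u
  proof (cases "h u")
    case (real hu)
    show ?thesis
    proof (cases "norm (u - p) \<le> 1")
      case True
      then have "u \<in> cball p 1" by (simp add: dist_norm norm_minus_commute)
      then have "m \<le> hu" using w m real by force
      moreover have "0 \<le> B * norm (u - p)" using m by (simp add: B_def)
      ultimately show ?thesis using real by simp
    next
      case False
      define r where "r = norm (u - p)"
      define t where "t = 1 / r"
      have r: "1 < r" using False by (simp add: r_def)
      then have t: "0 < t" "t < 1" by (auto simp: t_def)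
      define v where "v = (1 - t) *\<^sub>R p + t *\<^sub>R u"
      have "norm (v - p) = t * r"
        using t by (simp add: v_def r_def algebra_simps flip: scaleR_diff_right)
      then have "v \<in> cball p 1" using r by (simp add: t_def dist_norm norm_minus_commute)
      then have "ereal m \<le> h v" using w m by auto
      also have "\<dots> \<le> ereal (1 - t) * h p + ereal t * h u"
        using assms(3) t unfolding convex_ext_def v_def by blast
      finally have "m \<le> (1 - t) * hp + t * hu" using hp real by simp
      then have "r * m \<le> (r - 1) * hp + hu"
        using r by (simp add: t_def field_simps)
      then show ?thesis using real m r by (simp add: r_def[symmetric] B_def algebra_simps)
    qed
  qed (use h_nm in simp_all)
  show ?thesis
  proof (intro exI conjI allI)
    show "0 \<le> B" using m by (simp add: B_def)
    fix u
    have "norm (u - p) \<le> norm (u - z) + norm (z - p)" by (rule norm_diff_triangle_le[of _ z]) simp_all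
    from mult_left_mono[OF this \<open>0 \<le> B\<close>]
    have "m - B * norm (z - p) - B * norm (u - z) \<le> m - B * norm (u - p)"
      by (simp add: algebra_simps)
    then show "ereal (m - B * norm (z - p) - B * norm (u - z)) \<le> h u"
      by (intro order.trans[OF _ minorant_p]) simp
  qed
qed

lemma prox_obj_attains_min:
  fixes h :: "'a::euclidean_space \<Rightarrow> ereal"
  assumes "proper_fun h" "lsc_fun h" "convex_ext h" "0 < L"
  shows "\<exists>y. \<forall>u. prox_obj f gf h xt L y \<le> prox_obj f gf h xt L u"
proof -
  define q where "q u = lin_f f gf u xt + L / 2 * (norm (u - xt))\<^sup>2" for u
  have obj: "prox_obj f gf h xt L = (\<lambda>u. ereal (q u) + h u)"
    by (simp add: fun_eq_iff prox_obj_def q_def)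
  have h_nm: "h w \<noteq> -\<infinity>" for w using assms(1) by (simp add: proper_fun_def)
  obtain p hp where hp: "h p = ereal hp"
    using assms(1) unfolding proper_fun_def by (metis less_ereal.simps(2) real_of_ereal.cases)
  obtain c B where "0 \<le> B" and minorant: "\<And>u. ereal (c - B * norm (u - xt)) \<le> h u"
    using convex_ext_norm_minorant[OF assms(1-3)] by blast
  \<comment> \<open>Far from xt the quadratic term beats the linear decrease of the model and of the
      minorant of h, so the objective exceeds its value at p.\<close>
  define G where "G = norm (gf xt)"
  define D where "D = \<bar>q p + hp - f xt - c\<bar>"
  define R where "R = max 1 (2 * (G + B + D) / L)"
  have q_ge: "f xt - G * norm (u - xt) + L / 2 * (norm (u - xt))\<^sup>2 \<le> q u" for u
    using norm_cauchy_schwarz[of "- gf xt" "u - xt"] by (simp add: q_def lin_f_def G_def)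
  have "prox_obj f gf h xt L p \<le> prox_obj f gf h xt L u" if far: "R < norm (u - xt)" for u
  proof -
    define s where "s = norm (u - xt)"
    have s: "1 < s" "2 * (G + B + D) / L < s" using far by (auto simp: s_def R_def)
    then have "G + B + D < L / 2 * s" using assms(4) by (simp add: field_simps)
    then have "s * (G + B + D) \<le> s * (L / 2 * s)" using s(1) by (intro mult_left_mono) auto
    then have "s * G + s * B + s * D \<le> L / 2 * s\<^sup>2" by (simp add: power2_eq_square algebra_simps)
    moreover have "D \<le> s * D" using mult_right_mono[of 1 s D] s(1) by (simp add: D_def)
    moreover have "q p + hp - f xt - c \<le> D" by (simp add: D_def)
    ultimately have "q p + hp \<le> f xt - s * G + L / 2 * s\<^sup>2 + (c - s * B)" by linarith
    also have "\<dots> \<le> q u + (c - s * B)" using q_ge[of u] by (simp add: s_def mult.commute)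
    finally have "ereal (q p) + h p \<le> ereal (q u) + ereal (c - s * B)" using hp by simp
    also have "\<dots> \<le> ereal (q u) + h u"
      using minorant[of u] by (intro add_left_mono) (simp add: s_def mult.commute)
    finally show ?thesis by (simp add: obj)
  qed
  moreover have "lsc_fun (prox_obj f gf h xt L)"
    unfolding obj q_def lin_f_def
    by (intro lsc_fun_add_continuous[OF assms(2) h_nm] continuous_intros)
  ultimately show ?thesis using lsc_fun_attains_min by blast
qed

lemma prox_pt_minimizes:
  fixes h :: "'a::euclidean_space \<Rightarrow> ereal"
  assumes "proper_fun h" "lsc_fun h" "convex_ext h" "0 < L"
  shows "prox_obj f gf h xt L (prox_pt f gf h xt L) \<le> prox_obj f gf h xt L u"
  using someI_ex[OF prox_obj_attains_min[OF assms]] by (simp add: prox_pt_def)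

lemma le_of_le_add_scaled:
  fixes a b C :: real
  assumes "\<And>t. 0 < t \<Longrightarrow> t < 1 \<Longrightarrow> a \<le> b + t * C"
  shows "a \<le> b"
proof (rule field_le_epsilon)
  fix e :: real assume "0 < e"
  define t where "t = min (1 / 2) (e / (\<bar>C\<bar> + 1))"
  have t: "0 < t" "t < 1" using \<open>0 < e\<close> by (auto simp: t_def)
  have "t * C \<le> t * \<bar>C\<bar>" using t by (simp add: mult_left_mono)
  also have "\<dots> \<le> e / (\<bar>C\<bar> + 1) * (\<bar>C\<bar> + 1)"
    using t \<open>0 < e\<close> by (intro mult_mono) (auto simp: t_def)
  finally have "t * C \<le> e" by simp
  then show "a \<le> b + e" using assms[OF t] by simp
qed

lemma prox_quadratic_along_segment:
  "lin_f f gf (y + t *\<^sub>R d) xt + L / 2 * (norm (y + t *\<^sub>R d - xt))\<^sup>2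
   = lin_f f gf y xt + L / 2 * (norm (y - xt))\<^sup>2 + t * inner (gf xt + L *\<^sub>R (y - xt)) d
     + t\<^sup>2 * (L / 2 * (norm d)\<^sup>2)"
  unfolding lin_f_def power2_norm_eq_inner
  by (simp add: inner_commute algebra_simps power2_eq_square)

lemma prox_minimizer_subgradient:
  fixes h :: "'a::real_inner \<Rightarrow> ereal"
  assumes "proper_fun h" "convex_ext h"
    and ymin: "\<And>u. prox_obj f gf h xt L y \<le> prox_obj f gf h xt L u"
  shows "L *\<^sub>R (xt - y) - gf xt \<in> subdiff h y"
proof -
  define q where "q u = lin_f f gf u xt + L / 2 * (norm (u - xt))\<^sup>2" for u
  have obj: "prox_obj f gf h xt L u = ereal (q u) + h u" for u by (simp add: prox_obj_def q_def)
  have h_nm: "h w \<noteq> -\<infinity>" for w using assms(1) by (simp add: proper_fun_def)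
  obtain p where "h p < \<infinity>" using assms(1) by (auto simp: proper_fun_def)
  then have "ereal (q y) + h y < \<infinity>" using ymin[of p] h_nm[of p] by (cases "h p") (auto simp: obj)
  then obtain hy where hy: "h y = ereal hy" using h_nm[of y] by (cases "h y") auto
  have "h y + ereal (inner (L *\<^sub>R (xt - y) - gf xt) (u - y)) \<le> h u" for u
  proof (cases "h u")
    case (real hu)
    define d where "d = u - y"
    define c where "c = inner (gf xt + L *\<^sub>R (y - xt)) d"
    \<comment> \<open>Compare y with the point y + t (u - y) of the segment towards u, then let t tend to 0.\<close>
    have "hy - hu \<le> c + t * (L / 2 * (norm d)\<^sup>2)" if t: "0 < t" "t < 1" for t
    proof -
      have "y + t *\<^sub>R d = (1 - t) *\<^sub>R y + t *\<^sub>R u" by (simp add: d_def algebra_simps)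
      then have "h (y + t *\<^sub>R d) \<le> ereal (1 - t) * h y + ereal t * h u"
        using assms(2) t unfolding convex_ext_def by presburger
      then obtain hz where hz: "h (y + t *\<^sub>R d) = ereal hz" "hz \<le> (1 - t) * hy + t * hu"
        using hy real h_nm[of "y + t *\<^sub>R d"] by (cases "h (y + t *\<^sub>R d)") auto
      have "q y + hy \<le> q (y + t *\<^sub>R d) + hz" using ymin[of "y + t *\<^sub>R d"] hy hz by (simp add: obj)
      then have "t * (hy - hu) \<le> t * (c + t * (L / 2 * (norm d)\<^sup>2))"
        using hz prox_quadratic_along_segment[of f gf y t d xt L]
        by (simp add: q_def c_def algebra_simps power2_eq_square)
      then show ?thesis using t by simp
    qed
    then have "hy - hu \<le> c" by (rule le_of_le_add_scaled)
    moreover have "inner (L *\<^sub>R (xt - y) - gf xt) (u - y) = - c"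
      by (simp add: c_def d_def algebra_simps)
    ultimately show ?thesis using hy real by simp
  qed (use h_nm in simp_all)
  then show ?thesis using hy by (simp add: subdiff_def)
qed

lemma prox_residual_in_subdiff:
  fixes h :: "'a::euclidean_space \<Rightarrow> ereal"
  assumes "proper_fun h" "lsc_fun h" "convex_ext h" "0 < L" "y = prox_pt f gf h xt L"
  shows "gf y - gf xt + L *\<^sub>R (xt - y) \<in> {gf y + g | g. g \<in> subdiff h y}"
proof -
  have "L *\<^sub>R (xt - y) - gf xt \<in> subdiff h y"
    using prox_minimizer_subgradient[OF assms(1,3) prox_pt_minimizes[OF assms(1-4)]] assms(5) by simp
  moreover have "gf y - gf xt + L *\<^sub>R (xt - y) = gf y + (L *\<^sub>R (xt - y) - gf xt)" by simp
  ultimately show ?thesis by blast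
qed

lemma gradient_lipschitz_upper_bound:
  fixes f :: "'a::real_inner \<Rightarrow> real"
  assumes f_grad: "\<And>z. (f has_derivative (\<lambda>d. inner (gf z) d)) (at z)"
    and f_lip: "\<And>z z'. norm (gf z' - gf z) \<le> Lbar * norm (z' - z)"
  shows "f y \<le> f x + inner (gf x) (y - x) + Lbar / 2 * (norm (y - x))\<^sup>2"
proof -
  define d where "d = y - x"
  define \<phi> where "\<phi> t = f (x + t *\<^sub>R d) - t * inner (gf x) d - Lbar / 2 * t\<^sup>2 * (norm d)\<^sup>2" for t
  have \<phi>_deriv: "(\<phi> has_real_derivative
      (inner (gf (x + t *\<^sub>R d)) d - inner (gf x) d - Lbar * t * (norm d)\<^sup>2)) (at t)" for t
  proof -
    have "((\<lambda>t. x + t *\<^sub>R d) has_derivative (\<lambda>s. s *\<^sub>R d)) (at t)"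
      by (auto intro!: derivative_eq_intros)
    from has_derivative_compose[OF this f_grad]
    have "((\<lambda>t. f (x + t *\<^sub>R d)) has_real_derivative inner (gf (x + t *\<^sub>R d)) d) (at t)"
      by (simp add: has_real_derivative_iff_has_vector_derivative has_vector_derivative_def
          o_def mult.commute)
    then show ?thesis unfolding \<phi>_def
      by (auto intro!: derivative_eq_intros simp: power2_eq_square)
  qed
  have slope_bound: "inner (gf (x + t *\<^sub>R d)) d - inner (gf x) d \<le> Lbar * t * (norm d)\<^sup>2"
    if "0 \<le> t" for t
  proof -
    have "inner (gf (x + t *\<^sub>R d)) d - inner (gf x) d \<le> norm (gf (x + t *\<^sub>R d) - gf x) * norm d"
      using norm_cauchy_schwarz by (simp flip: inner_diff_left)
    also have "\<dots> \<le> Lbar * norm (t *\<^sub>R d) * norm d"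
      using f_lip[of x "x + t *\<^sub>R d"] by (intro mult_right_mono) (auto simp: norm_minus_commute)
    finally show ?thesis using that by (simp add: power2_eq_square)
  qed
  have "\<phi> 1 \<le> \<phi> 0"
  proof (rule DERIV_nonpos_imp_nonincreasing[of 0 1])
    fix t :: real assume "0 \<le> t" "t \<le> 1"
    then show "\<exists>D. (\<phi> has_real_derivative D) (at t) \<and> D \<le> 0"
      using \<phi>_deriv[of t] slope_bound[of t] by force
  qed simp
  then show ?thesis unfolding \<phi>_def d_def by (simp add: algebra_simps)
qed

lemma ls_ok_if_large:
  assumes "\<And>z. (f has_derivative (\<lambda>d. inner (gf z) d)) (at z)"
    and "\<And>z z'. norm (gf z' - gf z) \<le> Lbar * norm (z' - z)"
    and "chi < 1" "2 * Lbar / (1 - chi) \<le> M"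
  shows "ls_ok f gf h chi tau A x y M"
proof -
  define xt where "xt = xtil A y (acoef tau A M) x"
  define yp where "yp = prox_pt f gf h xt M"
  have "Lbar / 2 \<le> (1 - chi) * M / 4" using assms(3,4) by (simp add: field_simps)
  then have "Lbar / 2 * (norm (yp - xt))\<^sup>2 \<le> (1 - chi) * M / 4 * (norm (yp - xt))\<^sup>2"
    by (intro mult_right_mono) auto
  with gradient_lipschitz_upper_bound[OF assms(1,2), of yp xt] show ?thesis
    unfolding ls_ok_def Let_def lin_f_def xt_def[symmetric] yp_def[symmetric] by linarith
qed

lemma norm_gradient_residual_le:
  assumes "\<And>z z'. norm (gf z' - gf z) \<le> Lbar * norm (z' - z)" "0 \<le> L" "L \<le> M"
  shows "norm (gf y - gf xt + L *\<^sub>R (xt - y)) \<le> (Lbar + M) * norm (y - xt)"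
proof -
  have "norm (gf y - gf xt + L *\<^sub>R (xt - y)) \<le> norm (gf y - gf xt) + norm (L *\<^sub>R (xt - y))"
    by (rule norm_triangle_ineq)
  also have "\<dots> \<le> Lbar * norm (y - xt) + M * norm (y - xt)"
  proof (rule add_mono)
    show "norm (gf y - gf xt) \<le> Lbar * norm (y - xt)" by (rule assms(1))
    have "L * norm (y - xt) \<le> M * norm (y - xt)" using assms(3) by (rule mult_right_mono) simp
    then show "norm (L *\<^sub>R (xt - y)) \<le> M * norm (y - xt)"
      using assms(2) by (simp add: norm_minus_commute)
  qed
  finally show ?thesis by (simp add: algebra_simps)
qed

lemma backtracking_step_bounds:
  fixes Lprev Lnew beta Mc :: real
  assumes "0 \<le> Lprev" "1 < beta" "Lnew = beta ^ k * Lprev"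
    and fails: "\<forall>i<k. \<not> P (beta ^ i * Lprev)" and passes: "\<And>M. Mc \<le> M \<Longrightarrow> P M"
  shows "Lprev \<le> Lnew" "Lnew \<le> max Lprev (beta * Mc)"
proof -
  show "Lprev \<le> Lnew" using assms(1-3) by (simp add: mult_le_cancel_right1)
  show "Lnew \<le> max Lprev (beta * Mc)"
  proof (cases k)
    case (Suc i)
    then have "beta ^ i * Lprev < Mc" using fails passes by (meson lessI not_le)
    then have "beta * (beta ^ i * Lprev) < beta * Mc" using assms(2) by simp
    then show ?thesis using assms(3) Suc by simp
  qed (use assms(3) in simp)
qed

lemma backtracking_sequence_bounds:
  fixes L :: "nat \<Rightarrow> real"
  assumes "0 \<le> L 0" "1 < beta"
    and step: "\<And>j. j < J \<Longrightarrow>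
      \<exists>k. L (Suc j) = beta ^ k * L j \<and> (\<forall>i<k. \<not> P j (beta ^ i * L j))"
    and passes: "\<And>j M. Mc \<le> M \<Longrightarrow> P j M"
  shows "\<And>j. j \<le> J \<Longrightarrow> L 0 \<le> L j \<and> L j \<le> max (L 0) (beta * Mc)"
    and "\<And>j. j < J \<Longrightarrow> L j \<le> L (Suc j)"
proof -
  have bounds: "L j \<le> L (Suc j) \<and> L (Suc j) \<le> max (L j) (beta * Mc)" if "j < J" "0 \<le> L j" for j
    using step[OF that(1)] backtracking_step_bounds[OF that(2) assms(2), of "L (Suc j)" _ "P j" Mc]
      passes by blast
  show range: "L 0 \<le> L j \<and> L j \<le> max (L 0) (beta * Mc)" if "j \<le> J" for j
    using that
  proof (induction j)
    case (Suc j)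
    then have "L 0 \<le> L j \<and> L j \<le> max (L 0) (beta * Mc)" by simp
    with bounds[of j] Suc.prems assms(1) show ?case by force
  qed simp
  show "L j \<le> L (Suc j)" if "j < J" for j
    using bounds[OF that] range[of j] that assms(1) by simp
qed

lemma ls_backtracking_bounds:
  assumes "\<And>z. (f has_derivative (\<lambda>d. inner (gf z) d)) (at z)"
    and "\<And>z z'. norm (gf z' - gf z) \<le> Lbar * norm (z' - z)"
    and "chi < 1" "1 < beta" "0 \<le> L 0"
    and ls: "\<And>j. 1 \<le> j \<Longrightarrow> j \<le> J \<Longrightarrow> \<exists>k::nat. L j = beta ^ k * L (j - 1)
      \<and> ls_ok f gf h chi (tau (j - 1)) (A (j - 1)) (x (j - 1)) (y (j - 1)) (beta ^ k * L (j - 1))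
      \<and> (\<forall>i<k. \<not> ls_ok f gf h chi (tau (j - 1)) (A (j - 1)) (x (j - 1)) (y (j - 1))
                    (beta ^ i * L (j - 1)))"
  shows "j \<le> J \<Longrightarrow> L 0 \<le> L j \<and> L j \<le> max (L 0) (2 * beta / (1 - chi) * Lbar)"
    and "j < J \<Longrightarrow> L j \<le> L (Suc j)"
proof -
  have step: "\<exists>k. L (Suc j) = beta ^ k * L j
      \<and> (\<forall>i<k. \<not> ls_ok f gf h chi (tau j) (A j) (x j) (y j) (beta ^ i * L j))" if "j < J" for j
    using ls[of "Suc j"] that by auto
  have passes: "ls_ok f gf h chi (tau j) (A j) (x j) (y j) M" if "2 * Lbar / (1 - chi) \<le> M" for j M
    using ls_ok_if_large[OF assms(1-3) that] .
  note bounds = backtracking_sequence_bounds[where P = "\<lambda>j. ls_ok f gf h chi (tau j) (A j) (x j) (y j)"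
      and Mc = "2 * Lbar / (1 - chi)" and J = J]
  show "j \<le> J \<Longrightarrow> L 0 \<le> L j \<and> L j \<le> max (L 0) (2 * beta / (1 - chi) * Lbar)"
    using bounds(1)[OF assms(5,4) step passes, of j] by (simp add: ac_simps)
  show "j < J \<Longrightarrow> L j \<le> L (Suc j)"
    using bounds(2)[OF assms(5,4) step passes, of j] by simp
qed

lemma acoef_pos:
  assumes "0 < tau" "0 \<le> A" "0 < L"
  shows "0 < acoef tau A L"
  using assms by (simp add: acoef_def add_pos_nonneg)

lemma acoef_equation:
  assumes "0 < tau" "0 \<le> A" "0 < L"
  shows "L * (acoef tau A L)\<^sup>2 = tau * (A + acoef tau A L)"
proof -
  define s where "s = sqrt (tau\<^sup>2 + 4 * tau * A * L)"
  have "s\<^sup>2 = tau\<^sup>2 + 4 * tau * A * L" unfolding s_def using assms by simp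
  then show ?thesis using assms
    by (simp add: acoef_def s_def[symmetric] power2_eq_square field_simps)
qed

lemma sqrt_increment_bound:
  fixes A a L tau :: real
  assumes "0 \<le> A" "0 < a" "0 < L" "L * a\<^sup>2 = tau * (A + a)"
  shows "tau \<le> 4 * L * (sqrt (A + a) - sqrt A)\<^sup>2"
proof -
  define \<alpha> where "\<alpha> = sqrt (A + a)"
  define \<beta> where "\<beta> = sqrt A"
  have sq: "\<alpha>\<^sup>2 = A + a" "\<beta>\<^sup>2 = A" using assms(1,2) by (simp_all add: \<alpha>_def \<beta>_def)
  have "0 \<le> \<beta>" "\<beta> \<le> \<alpha>" "0 < \<alpha>" using assms(1,2) by (simp_all add: \<alpha>_def \<beta>_def)
  have "a = (\<alpha> - \<beta>) * (\<alpha> + \<beta>)" using sq by (simp add: algebra_simps power2_eq_square)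
  also have "\<dots> \<le> (\<alpha> - \<beta>) * (2 * \<alpha>)"
    using \<open>0 \<le> \<beta>\<close> \<open>\<beta> \<le> \<alpha>\<close> by (intro mult_left_mono) auto
  finally have "a \<le> (\<alpha> - \<beta>) * (2 * \<alpha>)" .
  then have "L * a\<^sup>2 \<le> L * ((\<alpha> - \<beta>) * (2 * \<alpha>))\<^sup>2"
    using assms(2,3) by (intro mult_left_mono power_mono) auto
  also have "\<dots> = \<alpha>\<^sup>2 * (4 * L * (\<alpha> - \<beta>)\<^sup>2)" by (simp add: power2_eq_square algebra_simps)
  finally have "tau * \<alpha>\<^sup>2 \<le> \<alpha>\<^sup>2 * (4 * L * (\<alpha> - \<beta>)\<^sup>2)"
    using assms(4) sq(1) by simp
  then show ?thesis using \<open>0 < \<alpha>\<close> by (simp add: \<alpha>_def \<beta>_def mult.commute)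
qed

locale estimate_weights =
  fixes mu :: real and J :: nat and L a A tau :: "nat \<Rightarrow> real"
  assumes mu_pos: "0 < mu"
    and A_0: "A 0 = 0" and tau_0: "tau 0 = 1" and L_0: "0 < L 0"
    and L_mono: "\<And>j. j < J \<Longrightarrow> L j \<le> L (Suc j)"
    and a_eq: "\<And>j. j < J \<Longrightarrow> a j = acoef (tau j) (A j) (L (Suc j))"
    and A_Suc: "\<And>j. j < J \<Longrightarrow> A (Suc j) = A j + a j"
    and tau_Suc: "\<And>j. j < J \<Longrightarrow> tau (Suc j) = tau j + a j * mu / 2"
begin

lemma L_le: "i \<le> j \<Longrightarrow> j \<le> J \<Longrightarrow> L i \<le> L j"
proof (induction j rule: dec_induct)
  case (step j)
  then show ?case using L_mono[of j] by simp
qed simp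

lemma L_pos: "j \<le> J \<Longrightarrow> 0 < L j"
  using L_le[of 0 j] L_0 by simp

lemma tau_eq: "j \<le> J \<Longrightarrow> tau j = 1 + mu * A j / 2"
  by (induction j) (simp_all add: A_0 tau_0 A_Suc tau_Suc algebra_simps)

lemma A_nonneg_a_pos: "j \<le> J \<Longrightarrow> 0 \<le> A j \<and> (j < J \<longrightarrow> 0 < a j)"
proof (induction j)
  case (Suc j)
  then have "0 \<le> A j" "0 < a j" by simp_all
  then show ?case
    using Suc.prems L_pos[of "Suc (Suc j)"] tau_eq[of "Suc j"] mu_pos
    by (auto simp: A_Suc a_eq intro!: acoef_pos add_pos_nonneg)
qed (use A_0 L_pos[of 1] tau_0 a_eq[of 0] acoef_pos in simp)

lemma A_nonneg: "j \<le> J \<Longrightarrow> 0 \<le> A j"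
  using A_nonneg_a_pos by blast

lemma tau_ge_1: "j \<le> J \<Longrightarrow> 1 \<le> tau j"
  using tau_eq[of j] A_nonneg[of j] mu_pos by simp

lemma a_pos: "j < J \<Longrightarrow> 0 < a j"
  using A_nonneg_a_pos[of j] by simp

lemma L_a_square: "j < J \<Longrightarrow> L (Suc j) * (a j)\<^sup>2 = tau j * A (Suc j)"
  using acoef_equation[of "tau j" "A j" "L (Suc j)"] A_nonneg[of j] L_pos[of "Suc j"]
    tau_eq[of j] mu_pos by (simp add: a_eq A_Suc add_pos_nonneg)

lemma L_eq_tau_A_div_a_square: "j < J \<Longrightarrow> tau j * A (Suc j) / (a j)\<^sup>2 = L (Suc j)"
  using L_a_square[of j] a_pos[of j] by (simp add: field_simps)

lemma sqrt_A_increment: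
  "j < J \<Longrightarrow> tau j \<le> 4 * L (Suc j) * (sqrt (A (Suc j)) - sqrt (A j))\<^sup>2"
  using sqrt_increment_bound[of "A j" "a j" "L (Suc j)" "tau j"] A_nonneg[of j] a_pos[of j]
    L_pos[of "Suc j"] L_a_square[of j] by (simp add: A_Suc)

lemma A_L_1: "0 < J \<Longrightarrow> A 1 * L 1 = 1"
  using L_pos[of 1] by (simp add: A_Suc a_eq A_0 tau_0 acoef_def)

lemma A_L_ge_square: "j \<le> J \<Longrightarrow> real j ^ 2 / 4 \<le> A j * L j"
proof -
  have "real j \<le> 2 * sqrt (A j) * sqrt (L j)" if "j \<le> J" for j
    using that
  proof (induction j)
    case (Suc j)
    have "1 \<le> 4 * L (Suc j) * (sqrt (A (Suc j)) - sqrt (A j))\<^sup>2"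
      using sqrt_A_increment[of j] tau_ge_1[of j] Suc.prems by simp
    also have "\<dots> = (2 * sqrt (L (Suc j)) * (sqrt (A (Suc j)) - sqrt (A j)))\<^sup>2"
      using L_pos[of "Suc j"] Suc.prems by (simp add: power_mult_distrib)
    finally have sq: "1\<^sup>2 \<le> (2 * sqrt (L (Suc j)) * (sqrt (A (Suc j)) - sqrt (A j)))\<^sup>2" by simp
    have "sqrt (A j) \<le> sqrt (A (Suc j))" using A_Suc[of j] a_pos[of j] Suc.prems by simp
    then have "0 \<le> 2 * sqrt (L (Suc j)) * (sqrt (A (Suc j)) - sqrt (A j))"
      by (intro mult_nonneg_nonneg) (use L_pos[of "Suc j"] Suc.prems in auto)
    with sq have "1 \<le> 2 * sqrt (L (Suc j)) * (sqrt (A (Suc j)) - sqrt (A j))"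
      by (rule power2_le_imp_le)
    moreover have "sqrt (L j) \<le> sqrt (L (Suc j))" using L_mono[of j] Suc.prems by simp
    then have "2 * sqrt (A j) * sqrt (L j) \<le> 2 * sqrt (A j) * sqrt (L (Suc j))"
      by (intro mult_left_mono) (use A_nonneg[of j] Suc.prems in simp_all)
    ultimately show ?case using Suc by (simp add: algebra_simps)
  qed (simp add: A_0)
  then have "real j ^ 2 \<le> (2 * sqrt (A j) * sqrt (L j))\<^sup>2" if "j \<le> J"
    using that by (intro power_mono) simp_all
  also have "\<dots> = 4 * (A j * L j)" if "j \<le> J"
    using A_nonneg[OF that] L_pos[OF that] by (simp add: power_mult_distrib)
  finally show "j \<le> J \<Longrightarrow> real j ^ 2 / 4 \<le> A j * L j" by simp
qed

lemma sqrt_A_geometric_step: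
  assumes "j < J" "0 \<le> q" "q\<^sup>2 * (8 * L (Suc j)) \<le> mu"
  shows "(1 + q) * sqrt (A j) \<le> sqrt (A (Suc j))"
proof -
  define \<alpha> where "\<alpha> = sqrt (A (Suc j))"
  define \<beta> where "\<beta> = sqrt (A j)"
  have "0 \<le> A j" "\<beta> \<le> \<alpha>"
    using A_nonneg[of j] A_Suc[of j] a_pos[of j] assms(1) by (simp_all add: \<alpha>_def \<beta>_def)
  have "8 * L (Suc j) * (q * \<beta>)\<^sup>2 = q\<^sup>2 * (8 * L (Suc j)) * \<beta>\<^sup>2"
    by (simp add: power_mult_distrib mult_ac)
  also have "\<dots> \<le> mu * \<beta>\<^sup>2" using assms(3) by (intro mult_right_mono) simp_all
  also have "\<dots> \<le> 2 * tau j" using tau_eq[of j] assms(1) \<open>0 \<le> A j\<close> by (simp add: \<beta>_def)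
  also have "\<dots> \<le> 8 * L (Suc j) * (\<alpha> - \<beta>)\<^sup>2"
    using sqrt_A_increment[OF assms(1)] by (simp add: \<alpha>_def \<beta>_def)
  finally have "8 * L (Suc j) * (q * \<beta>)\<^sup>2 \<le> 8 * L (Suc j) * (\<alpha> - \<beta>)\<^sup>2" .
  then have "(q * \<beta>)\<^sup>2 \<le> (\<alpha> - \<beta>)\<^sup>2"
    by (rule mult_left_le_imp_le) (use L_pos[of "Suc j"] assms(1) in simp)
  then have "q * \<beta> \<le> \<alpha> - \<beta>" by (rule power2_le_imp_le) (use \<open>\<beta> \<le> \<alpha>\<close> in simp)
  then have "(1 + q) * \<beta> \<le> \<alpha>" by (simp add: algebra_simps)
  then show ?thesis by (simp only: \<alpha>_def \<beta>_def)
qed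

lemma A_L_ge_geometric:
  assumes L_le_M: "\<And>j. j \<le> J \<Longrightarrow> L j \<le> M" and j: "1 \<le> j" "j \<le> J"
  shows "(1 + 1 / (2 * sqrt 2 * sqrt (M / mu))) ^ (2 * (j - 1)) \<le> A j * L j"
proof -
  define q where "q = 1 / (2 * sqrt 2 * sqrt (M / mu))"
  have M: "0 < M" using L_le_M[of 0] L_0 by simp
  have "0 \<le> q" using M mu_pos by (simp add: q_def)
  have "(2 * sqrt 2 * sqrt (M / mu))\<^sup>2 = 8 * (M / mu)"
    using M mu_pos by (simp add: power_mult_distrib)
  then have "q\<^sup>2 * (8 * M) = mu" using M mu_pos by (simp add: q_def power_divide)
  moreover have "q\<^sup>2 * (8 * L (Suc i)) \<le> q\<^sup>2 * (8 * M)" if "i < J" for i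
    using L_le_M[of "Suc i"] that by (intro mult_left_mono) simp_all
  ultimately have q_sq: "q\<^sup>2 * (8 * L (Suc i)) \<le> mu" if "i < J" for i
    using that by simp
  have "(1 + q) ^ (j - 1) * sqrt (A 1) \<le> sqrt (A j)"
    using j
  proof (induction j rule: dec_induct)
    case (step i)
    have "(1 + q) ^ (Suc i - 1) * sqrt (A 1) = (1 + q) * ((1 + q) ^ (i - 1) * sqrt (A 1))"
      using step.hyps(1) by (cases i) auto
    also have "\<dots> \<le> (1 + q) * sqrt (A i)"
      using step \<open>0 \<le> q\<close> by (intro mult_left_mono) simp_all
    also have "\<dots> \<le> sqrt (A (Suc i))"
      using step.hyps(2) step.prems \<open>0 \<le> q\<close> q_sq[of i] by (intro sqrt_A_geometric_step) simp_all
    finally show ?case .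
  qed simp
  then have "((1 + q) ^ (j - 1) * sqrt (A 1))\<^sup>2 \<le> (sqrt (A j))\<^sup>2"
    using \<open>0 \<le> q\<close> A_nonneg[of 1] j by (intro power_mono) simp_all
  then have "(1 + q) ^ (2 * (j - 1)) * A 1 \<le> A j"
    using A_nonneg[of 1] A_nonneg[of j] j by (simp add: power_mult_distrib power_even_eq mult.commute)
  then have "(1 + q) ^ (2 * (j - 1)) * A 1 * L 1 \<le> A j * L 1"
    by (rule mult_right_mono) (use L_pos[of 1] j in simp)
  also have "\<dots> \<le> A j * L j"
    by (rule mult_left_mono) (use L_le[of 1 j] A_nonneg[of j] j in simp_all)
  finally have "(1 + q) ^ (2 * (j - 1)) * (A 1 * L 1) \<le> A j * L j" by (simp only: mult.assoc)
  then show ?thesis unfolding q_def[symmetric] using A_L_1 j by simp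
qed

end

theorem lemma2p3:
  fixes f :: "'a::euclidean_space \<Rightarrow> real" and gf :: "'a \<Rightarrow> 'a"
    and h :: "'a \<Rightarrow> ereal"
    and Lbar mubar chi beta epshat mu Mlow :: real
    and x0 :: 'a and J :: nat
    and L a A tau :: "nat \<Rightarrow> real"
    and x y xt xi s v :: "nat \<Rightarrow> 'a"
  assumes f_conv: "convex_on UNIV f"
    and f_grad: "\<And>z. (f has_derivative (\<lambda>d. inner (gf z) d)) (at z)"
    and f_lip: "\<And>z z'. norm (gf z' - gf z) \<le> Lbar * norm (z' - z)"
    and Lbar_nn: "Lbar \<ge> 0"
    and h_proper: "proper_fun h" and h_lsc: "lsc_fun h" and h_conv: "convex_ext h"
    and mubar_pos: "mubar > 0"
    and phi_sc: "strongly_convex_ext mubar (\<lambda>u. ereal (f u) + h u)"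
    and chi: "0 < chi" "chi < 1" and beta: "beta > 1" and epshat: "epshat > 0"
    and mu_pos: "mu > 0" and Mlow_pos: "Mlow > 0"
    and x0_dom: "x0 \<in> dom_fun h"
    (* initialization of the cycle *)
    and init: "x 0 = x0" "y 0 = x0" "xi 0 = x0" "A 0 = 0" "tau 0 = 1" "L 0 = Mlow"
    (* steps (i)-(ii): backtracking line search, L j = beta^k L (j-1) with k minimal *)
    and ls: "\<And>j. 1 \<le> j \<Longrightarrow> j \<le> J \<Longrightarrow> \<exists>k::nat. L j = beta ^ k * L (j - 1)
              \<and> ls_ok f gf h chi (tau (j - 1)) (A (j - 1)) (x (j - 1)) (y (j - 1)) (beta ^ k * L (j - 1))
              \<and> (\<forall>i<k. \<not> ls_ok f gf h chi (tau (j - 1)) (A (j - 1)) (x (j - 1)) (y (j - 1)) (beta ^ i * L (j - 1)))"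
    and a_def: "\<And>j. 1 \<le> j \<Longrightarrow> j \<le> J \<Longrightarrow> a (j - 1) = acoef (tau (j - 1)) (A (j - 1)) (L j)"
    and xt_def: "\<And>j. 1 \<le> j \<Longrightarrow> j \<le> J \<Longrightarrow> xt (j - 1) = xtil (A (j - 1)) (y (j - 1)) (a (j - 1)) (x (j - 1))"
    and y_def: "\<And>j. 1 \<le> j \<Longrightarrow> j \<le> J \<Longrightarrow> y j = prox_pt f gf h (xt (j - 1)) (L j)"
    (* step (iii) *)
    and xi_def: "\<And>j. 1 \<le> j \<Longrightarrow> j \<le> J \<Longrightarrow>
              xi j = (if ereal (f (y j)) + h (y j) \<le> ereal (f (xi (j - 1))) + h (xi (j - 1)) then y j else xi (j - 1))"
    and A_def: "\<And>j. 1 \<le> j \<Longrightarrow> j \<le> J \<Longrightarrow> A j = A (j - 1) + a (j - 1)"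
    and tau_def: "\<And>j. 1 \<le> j \<Longrightarrow> j \<le> J \<Longrightarrow> tau j = tau (j - 1) + a (j - 1) * mu / 2"
    and s_def: "\<And>j. 1 \<le> j \<Longrightarrow> j \<le> J \<Longrightarrow> s j = L j *\<^sub>R (xt (j - 1) - y j)"
    and x_def: "\<And>j. 1 \<le> j \<Longrightarrow> j \<le> J \<Longrightarrow>
              x j = (1 / tau j) *\<^sub>R ((mu * a (j - 1) / 2) *\<^sub>R y j + tau (j - 1) *\<^sub>R x (j - 1) - a (j - 1) *\<^sub>R s j)"
    and v_def: "\<And>j. 1 \<le> j \<Longrightarrow> j \<le> J \<Longrightarrow> v j = gf (y j) - gf (xt (j - 1)) + s j"
    (* steps (iv)-(v): iterations before J neither restart nor stop *)
    and no_restart: "\<And>j. 1 \<le> j \<Longrightarrow> j < J \<Longrightarrow>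
              \<not> ((norm (xi j - x0))\<^sup>2 < chi * A j * L j * (norm (y j - xt (j - 1)))\<^sup>2)"
    and no_stop: "\<And>j. 1 \<le> j \<Longrightarrow> j < J \<Longrightarrow> norm (v j) > epshat"
  shows "\<forall>j. 1 \<le> j \<and> j \<le> J \<longrightarrow>
      (let kappa = 2 * beta / (1 - chi);
           zeta = Lbar + max Mlow (kappa * Lbar);
           Q = 2 * sqrt 2 * sqrt (max Mlow (kappa * Lbar) / mu)
       in L (j - 1) \<le> L j
        \<and> tau (j - 1) = 1 + mu * A (j - 1) / 2
        \<and> tau (j - 1) * A j / (a (j - 1))\<^sup>2 = L j
        \<and> Mlow \<le> L (j - 1) \<and> L (j - 1) \<le> max Mlow (kappa * Lbar)
        \<and> v j \<in> {gf (y j) + g | g. g \<in> subdiff h (y j)}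
        \<and> norm (v j) \<le> zeta * norm (y j - xt (j - 1))
        \<and> A j * L j \<ge> max (real j ^ 2 / 4) ((1 + 1 / Q) ^ (2 * (j - 1))))"
proof -
  define M where "M = max Mlow (2 * beta / (1 - chi) * Lbar)"
  have "0 \<le> L 0" using init Mlow_pos by simp
  have L_range: "Mlow \<le> L j \<and> L j \<le> M" if "j \<le> J" for j
  proof -
    have "L 0 \<le> L j \<and> L j \<le> max (L 0) (2 * beta / (1 - chi) * Lbar)"
      by (rule ls_backtracking_bounds(1)[where L = L])
        (fact f_grad f_lip chi(2) beta \<open>0 \<le> L 0\<close> ls that)+
    then show ?thesis using init by (simp add: M_def)
  qed
  have L_mono: "L j \<le> L (Suc j)" if "j < J" for j
    by (rule ls_backtracking_bounds(2)[where L = L])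
        (fact f_grad f_lip chi(2) beta \<open>0 \<le> L 0\<close> ls that)+
  interpret estimate_weights mu J L a A tau
    by unfold_locales (use mu_pos init Mlow_pos L_mono a_def[of "Suc _"] A_def[of "Suc _"]
        tau_def[of "Suc _"] in simp_all)
  show ?thesis
  proof (intro allI impI)
    fix j assume "1 \<le> j \<and> j \<le> J"
    then obtain i where j: "j = Suc i" "i < J" by (cases j) auto
    have L_j: "0 < L j" "L j \<le> M" using L_pos L_range[of j] j by simp_all
    have v: "v j = gf (y j) - gf (xt i) + L j *\<^sub>R (xt i - y j)"
      using v_def[of j] s_def[of j] j by simp
    show "let kappa = 2 * beta / (1 - chi);
           zeta = Lbar + max Mlow (kappa * Lbar);
           Q = 2 * sqrt 2 * sqrt (max Mlow (kappa * Lbar) / mu)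
       in L (j - 1) \<le> L j
        \<and> tau (j - 1) = 1 + mu * A (j - 1) / 2
        \<and> tau (j - 1) * A j / (a (j - 1))\<^sup>2 = L j
        \<and> Mlow \<le> L (j - 1) \<and> L (j - 1) \<le> max Mlow (kappa * Lbar)
        \<and> v j \<in> {gf (y j) + g | g. g \<in> subdiff h (y j)}
        \<and> norm (v j) \<le> zeta * norm (y j - xt (j - 1))
        \<and> A j * L j \<ge> max (real j ^ 2 / 4) ((1 + 1 / Q) ^ (2 * (j - 1)))"
      unfolding Let_def M_def[symmetric] v
      using j L_mono[of i] tau_eq[of i] L_eq_tau_A_div_a_square[of i] L_range[of i]
        prox_residual_in_subdiff[OF h_proper h_lsc h_conv L_j(1) y_def[of j]]
        norm_gradient_residual_le[OF f_lip _ L_j(2)] L_j(1)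
        A_L_ge_square[of j] A_L_ge_geometric[OF conjunct2[OF L_range], of j]
      by simp
  qed
qed

end
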